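(* Let $\mathcal{D}$ be a set, $\Sigma$ a finite set and $R\subseteq\mathcal{D}^\Sigma$. Suppose one of the following holds: (i) $R\neq\mathcal{D}^\Sigma$, but $\pi_\Lambda R=\mathcal{D}^\Lambda$ for every non-empty proper subset $\emptyset\subset\Lambda\subset\Sigma$; (ii) $\neg R$ is non-empty, but $\pi_{\{i\}}(\neg R)\neq\mathcal{D}$ for every $i\in\Sigma$. Then $R$ is join irreducible.
   Context: Attributed relation: $R\subseteq\mathcal{D}^\Sigma$, $\Sigma$ finite; $\pi_\Lambda R=\{a|_\Lambda:a\in R\}$; $\neg R=\mathcal{D}^\Sigma\setminus R$. The join of $R_i\subseteq\mathcal{D}^{\Lambda_i}$ is $R_1\Join\dots\Join R_m=\{a\in\mathcal{D}^{\cup_i\Lambda_i}: a|_{\Lambda_i}\in R_i\ \forall i\}$. $R$ is join reducible if $R=R^{\Lambda_1}\Join\dots\Join R^{\Lambda_m}$ for some cover $\Sigma=\Lambda_1\cup\dots\cup\Lambda_m$ with $R^{\Lambda_i}\subseteq\mathcal{D}^{\Lambda_i}$ and $0<|\Lambda_i|<|\Sigma|$; otherwise join irreducible. *)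

theory Defs
  imports "HOL-Library.FuncSet"
begin

text \<open>Tuples over attribute set Sigma with values in D are the extensional
functions in PiE Sigma (\<lambda>_. D); restriction a|Lambda is restrict a Lambda.\<close>

definition proj :: "'i set \<Rightarrow> ('i \<Rightarrow> 'd) set \<Rightarrow> ('i \<Rightarrow> 'd) set" where
  "proj \<Lambda> R = (\<lambda>a. restrict a \<Lambda>) ` R"

definition rel_neg :: "'d set \<Rightarrow> 'i set \<Rightarrow> ('i \<Rightarrow> 'd) set \<Rightarrow> ('i \<Rightarrow> 'd) set" where
  "rel_neg D \<Sigma> R = (\<Pi>\<^sub>E i\<in>\<Sigma>. D) - R"

definition rel_join :: "'d set \<Rightarrow> nat \<Rightarrow> (nat \<Rightarrow> 'i set) \<Rightarrow> (nat \<Rightarrow> ('i \<Rightarrow> 'd) set) \<Rightarrow> ('i \<Rightarrow> 'd) set" where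
  "rel_join D m Ls Rs = {a \<in> (\<Pi>\<^sub>E i\<in>(\<Union>k<m. Ls k). D). \<forall>k<m. restrict a (Ls k) \<in> Rs k}"

definition join_reducible :: "'d set \<Rightarrow> 'i set \<Rightarrow> ('i \<Rightarrow> 'd) set \<Rightarrow> bool" where
  "join_reducible D \<Sigma> R \<longleftrightarrow>
     (\<exists>m Ls Rs. (\<Union>k<m. Ls k) = \<Sigma> \<and>
        (\<forall>k<m. Rs k \<subseteq> (\<Pi>\<^sub>E i\<in>Ls k. D) \<and> 0 < card (Ls k) \<and> card (Ls k) < card \<Sigma>) \<and>
        R = rel_join D m Ls Rs)"

definition join_irreducible :: "'d set \<Rightarrow> 'i set \<Rightarrow> ('i \<Rightarrow> 'd) set \<Rightarrow> bool" where
  "join_irreducible D \<Sigma> R \<longleftrightarrow> \<not> join_reducible D \<Sigma> R"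

end

theory Submission
  imports Defs
begin

text \<open>A join only constrains a tuple through its restrictions to the proper attribute sets
  \<open>\<Lambda>\<^sub>k\<close>, so \<open>R\<close> is already the join of its own projections \<open>\<pi>\<^sub>\<Lambda>\<^sub>k R\<close>. If all these
  projections are full, the join is the full relation, which rules out (i). Under (ii), pick a
  tuple \<open>b \<notin> R\<close>; some factor \<open>k\<close> rejects \<open>b|\<^sub>\<Lambda>\<^sub>k\<close>. Choose an attribute \<open>j \<notin> \<Lambda>\<^sub>k\<close> and a
  value \<open>d\<close> that no tuple of \<open>\<not>R\<close> takes at \<open>j\<close>: changing \<open>b\<close> at \<open>j\<close> to \<open>d\<close> gives a tuple of
  \<open>R\<close> that factor \<open>k\<close> still rejects, a contradiction.\<close>

lemma join_reducibleE:
  assumes "join_reducible D \<Sigma> R"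
  obtains m Ls Rs where "(\<Union>k<m. Ls k) = \<Sigma>"
    and "\<And>k. k < m \<Longrightarrow> Ls k \<noteq> {} \<and> Ls k \<subset> \<Sigma>"
    and "R = rel_join D m Ls Rs"
proof -
  obtain m Ls Rs where cover: "(\<Union>k<m. Ls k) = \<Sigma>"
    and card: "\<And>k. k < m \<Longrightarrow> 0 < card (Ls k) \<and> card (Ls k) < card \<Sigma>"
    and join: "R = rel_join D m Ls Rs"
    using assms unfolding join_reducible_def by blast
  have "Ls k \<noteq> {} \<and> Ls k \<subset> \<Sigma>" if "k < m" for k
    using card[OF that] cover that by auto
  with cover join that show thesis by blast
qed

lemma rel_join_proj:
  assumes "R = rel_join D m Ls Rs"
  shows "R = rel_join D m Ls (\<lambda>k. proj (Ls k) R)"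
proof
  show "R \<subseteq> rel_join D m Ls (\<lambda>k. proj (Ls k) R)"
    using assms by (auto simp: rel_join_def proj_def)
next
  show "rel_join D m Ls (\<lambda>k. proj (Ls k) R) \<subseteq> R"
    using assms by (auto simp: rel_join_def proj_def)
qed

lemma rel_join_PiE:
  assumes "\<And>k. k < m \<Longrightarrow> Rs k = (\<Pi>\<^sub>E i\<in>Ls k. D)"
  shows "rel_join D m Ls Rs = (\<Pi>\<^sub>E i\<in>(\<Union>k<m. Ls k). D)"
  unfolding rel_join_def using assms by (auto simp: restrict_PiE_iff PiE_mem)

lemma proj_subset_PiE:
  assumes "S \<subseteq> (\<Pi>\<^sub>E i\<in>\<Sigma>. D)" and "\<Lambda> \<subseteq> \<Sigma>"
  shows "proj \<Lambda> S \<subseteq> (\<Pi>\<^sub>E i\<in>\<Lambda>. D)"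
proof
  fix b assume "b \<in> proj \<Lambda> S"
  then obtain a where "a \<in> S" and b: "b = restrict a \<Lambda>" unfolding proj_def by blast
  then have "\<forall>i\<in>\<Lambda>. a i \<in> D" using assms PiE_mem by blast
  then show "b \<in> (\<Pi>\<^sub>E i\<in>\<Lambda>. D)" unfolding b by (simp add: restrict_PiE_iff)
qed

lemma PiE_singleton_subset_proj:
  assumes "D \<subseteq> (\<lambda>c. c i) ` S"
  shows "(\<Pi>\<^sub>E j\<in>{i}. D) \<subseteq> proj {i} S"
proof
  fix f assume f: "f \<in> (\<Pi>\<^sub>E j\<in>{i}. D)"
  then have "f i \<in> D" by (rule PiE_mem) simp
  then obtain c where "c \<in> S" and "c i = f i" using assms by force
  have "f = restrict c {i}"
  proof (rule PiE_ext[OF f])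
    show "restrict c {i} \<in> (\<Pi>\<^sub>E j\<in>{i}. D)" using \<open>c i = f i\<close> \<open>f i \<in> D\<close> by simp
  qed (simp add: \<open>c i = f i\<close>)
  with \<open>c \<in> S\<close> show "f \<in> proj {i} S" unfolding proj_def by blast
qed

lemma missing_value_if_proj_singleton_ne_PiE:
  assumes "S \<subseteq> (\<Pi>\<^sub>E i\<in>\<Sigma>. D)" and "i \<in> \<Sigma>" and "proj {i} S \<noteq> (\<Pi>\<^sub>E j\<in>{i}. D)"
  shows "\<exists>d\<in>D. \<forall>c\<in>S. c i \<noteq> d"
proof (rule ccontr)
  assume "\<not> ?thesis"
  then have "D \<subseteq> (\<lambda>c. c i) ` S" by fastforce
  then have "(\<Pi>\<^sub>E j\<in>{i}. D) \<subseteq> proj {i} S" by (rule PiE_singleton_subset_proj)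
  moreover have "proj {i} S \<subseteq> (\<Pi>\<^sub>E j\<in>{i}. D)"
    using assms(2) by (intro proj_subset_PiE[OF assms(1)]) simp
  ultimately show False using assms(3) by blast
qed

lemma join_irreducible_if_proper_projections_full:
  assumes "R \<noteq> (\<Pi>\<^sub>E i\<in>\<Sigma>. D)"
    and "\<And>\<Lambda>. {} \<subset> \<Lambda> \<Longrightarrow> \<Lambda> \<subset> \<Sigma> \<Longrightarrow> proj \<Lambda> R = (\<Pi>\<^sub>E i\<in>\<Lambda>. D)"
  shows "join_irreducible D \<Sigma> R"
  unfolding join_irreducible_def
proof
  assume "join_reducible D \<Sigma> R"
  then obtain m Ls Rs where cover: "(\<Union>k<m. Ls k) = \<Sigma>"
    and proper: "\<And>k. k < m \<Longrightarrow> Ls k \<noteq> {} \<and> Ls k \<subset> \<Sigma>"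
    and join: "R = rel_join D m Ls Rs"
    by (elim join_reducibleE) blast
  have full: "proj (Ls k) R = (\<Pi>\<^sub>E i\<in>Ls k. D)" if "k < m" for k
    using proper[OF that] by (intro assms(2)) auto
  have "R = rel_join D m Ls (\<lambda>k. proj (Ls k) R)"
    using join by (rule rel_join_proj)
  also have "\<dots> = (\<Pi>\<^sub>E i\<in>\<Sigma>. D)"
    unfolding cover[symmetric] using full by (rule rel_join_PiE)
  finally show False using assms(1) by contradiction
qed

lemma join_irreducible_if_complement_misses_values:
  assumes "rel_neg D \<Sigma> R \<noteq> {}"
    and "\<And>i. i \<in> \<Sigma> \<Longrightarrow> \<exists>d\<in>D. \<forall>c\<in>rel_neg D \<Sigma> R. c i \<noteq> d"
  shows "join_irreducible D \<Sigma> R"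
  unfolding join_irreducible_def
proof
  assume "join_reducible D \<Sigma> R"
  then obtain m Ls Rs where cover: "(\<Union>k<m. Ls k) = \<Sigma>"
    and proper: "\<And>k. k < m \<Longrightarrow> Ls k \<noteq> {} \<and> Ls k \<subset> \<Sigma>"
    and join: "R = rel_join D m Ls Rs"
    by (elim join_reducibleE) blast
  obtain b where b: "b \<in> (\<Pi>\<^sub>E i\<in>\<Sigma>. D)" "b \<notin> R"
    using assms(1) unfolding rel_neg_def by blast
  then have "\<not> (\<forall>k<m. restrict b (Ls k) \<in> Rs k)"
    using join cover by (simp add: rel_join_def)
  then obtain k where "k < m" and rejected: "restrict b (Ls k) \<notin> Rs k"
    by blast
  then obtain j where "j \<in> \<Sigma>" "j \<notin> Ls k" using proper by blast
  then obtain d where "d \<in> D" and missing: "\<forall>c\<in>rel_neg D \<Sigma> R. c j \<noteq> d"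
    using assms(2) by blast
  have "b(j := d) \<in> (\<Pi>\<^sub>E i\<in>\<Sigma>. D)"
    using PiE_fun_upd[OF \<open>d \<in> D\<close> b(1), of j] \<open>j \<in> \<Sigma>\<close> by (simp add: insert_absorb)
  moreover have "b(j := d) \<notin> rel_neg D \<Sigma> R"
    using missing fun_upd_same by metis
  ultimately have "b(j := d) \<in> R" unfolding rel_neg_def by blast
  then have "restrict (b(j := d)) (Ls k) \<in> Rs k"
    using join \<open>k < m\<close> unfolding rel_join_def by blast
  moreover have "restrict (b(j := d)) (Ls k) = restrict b (Ls k)"
    using \<open>j \<notin> Ls k\<close> by (intro restrict_ext) auto
  ultimately show False using rejected by simp
qed

theorem theorem16:
  fixes D :: "'d set" and \<Sigma> :: "'i set" and R :: "('i \<Rightarrow> 'd) set"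
  assumes "finite \<Sigma>"
    and "R \<subseteq> (\<Pi>\<^sub>E i\<in>\<Sigma>. D)"
    and "(R \<noteq> (\<Pi>\<^sub>E i\<in>\<Sigma>. D) \<and>
          (\<forall>\<Lambda>. {} \<subset> \<Lambda> \<and> \<Lambda> \<subset> \<Sigma> \<longrightarrow> proj \<Lambda> R = (\<Pi>\<^sub>E i\<in>\<Lambda>. D)))
         \<or> (rel_neg D \<Sigma> R \<noteq> {} \<and>
          (\<forall>i\<in>\<Sigma>. proj {i} (rel_neg D \<Sigma> R) \<noteq> (\<Pi>\<^sub>E j\<in>{i}. D)))"
  shows "join_irreducible D \<Sigma> R"
  using assms(3)
proof
  assume "R \<noteq> (\<Pi>\<^sub>E i\<in>\<Sigma>. D) \<and>
    (\<forall>\<Lambda>. {} \<subset> \<Lambda> \<and> \<Lambda> \<subset> \<Sigma> \<longrightarrow> proj \<Lambda> R = (\<Pi>\<^sub>E i\<in>\<Lambda>. D))"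
  then show ?thesis by (intro join_irreducible_if_proper_projections_full) auto
next
  assume neg: "rel_neg D \<Sigma> R \<noteq> {} \<and>
    (\<forall>i\<in>\<Sigma>. proj {i} (rel_neg D \<Sigma> R) \<noteq> (\<Pi>\<^sub>E j\<in>{i}. D))"
  have "rel_neg D \<Sigma> R \<subseteq> (\<Pi>\<^sub>E i\<in>\<Sigma>. D)" unfolding rel_neg_def by blast
  with neg have "\<exists>d\<in>D. \<forall>c\<in>rel_neg D \<Sigma> R. c i \<noteq> d" if "i \<in> \<Sigma>" for i
    using that by (intro missing_value_if_proj_singleton_ne_PiE) auto
  with neg show ?thesis by (intro join_irreducible_if_complement_misses_values) auto
qed

end
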